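(* Let $n\ge1$, $\mathcal{X}$ the simplex in $\mathbb{R}^{n+1}$, $\theta$ a kernel, $\Phi$ a Lipschitz continuous smooth function on an open neighborhood of $\mathcal{X}$, and $\eta>0$. Let $x(t)$ be an interior solution of the inertial dynamics (ID) defined for all $t\ge0$, let $x^\omega$ be an $\omega$-limit point of $x(t)$ (i.e. $x(t_n)\to x^\omega$ for some $t_n\to\infty$), and let $U$ be a neighborhood of $x^\omega$ in $\mathcal{X}$. Then for every $T>0$ there exists an interval $J$ of length at least $T$ such that $x(t)\in U$ for all $t\in J$.
   Context: $\mathcal{X}=\{x\in\mathbb{R}^{n+1}:x_\alpha\ge0,\sum_\alpha x_\alpha=1\}$ with relative interior $\mathcal{X}^\circ$. A kernel is a $C^\infty$ function $\theta:[0,\infty)\to\mathbb{R}\cup\{+\infty\}$ with $\theta(x)<\infty$ for $x>0$, $\lim_{x\to0^+}\theta'(x)=-\infty$, $\theta''>0$, $\theta'''<0$ on $(0,\infty)$. With $\theta''_\alpha=\theta''(x_\alpha)$, $\theta'''_\alpha=\theta'''(x_\alpha)$, $\Theta''=(\sum_\beta1/\theta''_\beta)^{-1}$, $v_\alpha=\partial\Phi/\partial x_\alpha$, the inertial dynamics (ID) on $\mathcal{X}^\circ$ are $$\ddot x_\alpha=\frac{1}{\theta''_\alpha}\Big[v_\alpha-\sum_{\beta}\frac{\Theta''}{\theta''_\beta}v_\beta\Big]-\frac{1}{2\theta''_\alpha}\Big[\theta'''_\alpha\dot x_\alpha^2-\sum_\beta\frac{\Theta''}{\theta''_\beta}\theta'''_\beta\dot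 x_\beta^2\Big]-\eta\dot x_\alpha.$$ *)

theory Defs
  imports "HOL-Analysis.Analysis"
begin

text \<open>The psimplex in R^(n+1), indexed by a finite type 'n with CARD('n) = n+1.\<close>
definition psimplex :: "(real ^ 'n :: finite) set" where
  "psimplex = {x. (\<forall>a. x $ a \<ge> 0) \<and> (\<Sum>a\<in>UNIV. x $ a) = 1}"

definition psimplex_int :: "(real ^ 'n :: finite) set" where
  "psimplex_int = {x. (\<forall>a. x $ a > 0) \<and> (\<Sum>a\<in>UNIV. x $ a) = 1}"

definition Cinf_real_on :: "real set \<Rightarrow> (real \<Rightarrow> real) \<Rightarrow> bool" where
  "Cinf_real_on S f \<longleftrightarrow> (\<forall>k. \<forall>x\<in>S. ((deriv ^^ k) f has_real_derivative (deriv ^^ Suc k) f x) (at x))"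

text \<open>Kernel: smooth on (0,inf) (its value at 0, possibly +inf, plays no role),
  theta' tends to -inf at 0+, theta'' > 0, theta''' < 0.\<close>
definition kernel :: "(real \<Rightarrow> real) \<Rightarrow> bool" where
  "kernel \<theta> \<longleftrightarrow> Cinf_real_on {0<..} \<theta>
     \<and> filterlim (deriv \<theta>) at_bot (at_right 0)
     \<and> (\<forall>x>0. (deriv ^^ 2) \<theta> x > 0)
     \<and> (\<forall>x>0. (deriv ^^ 3) \<theta> x < 0)"

definition partial :: "'n :: finite \<Rightarrow> (real ^ 'n \<Rightarrow> real) \<Rightarrow> real ^ 'n \<Rightarrow> real" where
  "partial a f x = frechet_derivative f (at x) (axis a 1)"

fun Ck_on :: "nat \<Rightarrow> (real ^ 'n :: finite) set \<Rightarrow> (real ^ 'n \<Rightarrow> real) \<Rightarrow> bool" where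
  "Ck_on 0 S f = continuous_on S f"
| "Ck_on (Suc k) S f = ((\<forall>x\<in>S. f differentiable (at x)) \<and> (\<forall>a. Ck_on k S (partial a f)))"

definition smooth_on :: "(real ^ 'n :: finite) set \<Rightarrow> (real ^ 'n \<Rightarrow> real) \<Rightarrow> bool" where
  "smooth_on S f \<longleftrightarrow> (\<forall>k. Ck_on k S f)"

definition ID_rhs :: "(real \<Rightarrow> real) \<Rightarrow> (real ^ 'n :: finite \<Rightarrow> real) \<Rightarrow> real
     \<Rightarrow> real ^ 'n \<Rightarrow> real ^ 'n \<Rightarrow> real ^ 'n" where
  "ID_rhs \<theta> \<Phi> \<eta> x xd =
     (let th2 = (\<lambda>a. (deriv ^^ 2) \<theta> (x $ a));
          th3 = (\<lambda>a. (deriv ^^ 3) \<theta> (x $ a));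
          Th2 = inverse (\<Sum>b\<in>UNIV. 1 / th2 b);
          v = (\<lambda>a. partial a \<Phi> x)
      in \<chi> a. (1 / th2 a) * (v a - (\<Sum>b\<in>UNIV. Th2 / th2 b * v b))
             - (1 / (2 * th2 a)) * (th3 a * (xd $ a)^2 - (\<Sum>b\<in>UNIV. Th2 / th2 b * th3 b * (xd $ b)^2))
             - \<eta> * xd $ a)"

definition ID_interior_solution :: "(real \<Rightarrow> real) \<Rightarrow> (real ^ 'n :: finite \<Rightarrow> real) \<Rightarrow> real
     \<Rightarrow> (real \<Rightarrow> real ^ 'n) \<Rightarrow> bool" where
  "ID_interior_solution \<theta> \<Phi> \<eta> x \<longleftrightarrow>
     (\<exists>xd xdd. \<forall>t\<ge>0. x t \<in> psimplex_int
        \<and> (x has_vector_derivative xd t) (at t within {0..})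
        \<and> (xd has_vector_derivative xdd t) (at t within {0..})
        \<and> xdd t = ID_rhs \<theta> \<Phi> \<eta> (x t) (xd t))"

end

theory Submission
  imports Defs
begin

(*
  Along (ID) the energy E = (1/2) \<Sum>\<^sub>\<alpha> \<theta>''(x\<^sub>\<alpha>) (x'\<^sub>\<alpha>)\<^sup>2 - \<Phi>(x) satisfies
  E' = -\<eta> \<Sum>\<^sub>\<alpha> \<theta>''(x\<^sub>\<alpha>) (x'\<^sub>\<alpha>)\<^sup>2: the constraint terms of (ID) drop out because \<Sum>\<^sub>\<alpha> x'\<^sub>\<alpha> = 0.
  As \<Phi> is bounded on the simplex, E is nonincreasing and bounded below, so its total decrease
  after a late enough time is as small as we like. Since \<theta>''' < 0, \<theta>'' \<ge> \<theta>''(1) on (0,1], hence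
  E' \<le> -\<kappa> |x'|\<^sup>2 with \<kappa> = \<eta> \<theta>''(1) > 0, and |x'| \<le> \<epsilon>/2 + |x'|\<^sup>2/(2\<epsilon>) bounds the distance
  travelled in time T by \<epsilon>T/2 plus the decrease of E divided by 2\<epsilon>\<kappa>. So late pieces of the
  orbit of duration T have small diameter, and one starting near the \<omega>-limit point stays in U.
*)

lemma has_real_derivative_vec_nth:
  "(x has_vector_derivative v) (at t) \<Longrightarrow> ((\<lambda>u. x u $ a) has_real_derivative v $ a) (at t)"
  unfolding has_real_derivative_iff_has_vector_derivative
  by (rule bounded_linear.has_vector_derivative[OF bounded_linear_vec_nth])

lemma has_real_derivative_comp_partial:
  assumes "f differentiable (at (x t))" "(x has_vector_derivative v) (at t)"
  shows "((\<lambda>t. f (x t)) has_real_derivative (\<Sum>a\<in>UNIV. v $ a * partial a f (x t))) (at t)"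
proof -
  define D where "D = frechet_derivative f (at (x t))"
  have f': "(f has_derivative D) (at (x t))"
    using assms(1) frechet_derivative_works unfolding D_def by blast
  then have "linear D" by (rule has_derivative_linear)
  have "D v = D (\<Sum>a\<in>UNIV. v $ a *\<^sub>R axis a 1)"
    using basis_expansion[of v] by (simp add: scalar_mult_eq_scaleR)
  also have "\<dots> = (\<Sum>a\<in>UNIV. v $ a * partial a f (x t))"
    unfolding partial_def D_def[symmetric] by (simp add: linear_sum[OF \<open>linear D\<close>] linear_scale[OF \<open>linear D\<close>])
  finally have "D v = \<dots>" .
  moreover have "((\<lambda>t. f (x t)) has_derivative (\<lambda>h. D (h *\<^sub>R v))) (at t)"
    using has_derivative_compose[OF assms(2)[unfolded has_vector_derivative_def] f'] .
  moreover have "(\<lambda>h. D (h *\<^sub>R v)) = (*) (D v)"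
    using linear_scale[OF \<open>linear D\<close>] by (auto simp: fun_eq_iff mult.commute)
  ultimately show ?thesis
    unfolding has_field_derivative_def by simp
qed

lemma dissipation_displacement_bound:
  fixes x :: "real \<Rightarrow> 'a::real_normed_vector" and E :: "real \<Rightarrow> real"
  assumes "a < t" "\<epsilon> > 0" "\<kappa> > 0"
    and x': "\<And>u. u \<in> {a..t} \<Longrightarrow> (x has_vector_derivative x' u) (at u)"
    and E': "\<And>u. u \<in> {a..t} \<Longrightarrow> (E has_real_derivative E' u) (at u)"
    and dissip: "\<And>u. u \<in> {a..t} \<Longrightarrow> E' u \<le> - \<kappa> * (norm (x' u))\<^sup>2"
  shows "norm (x t - x a) \<le> \<epsilon> * (t - a) / 2 + (E a - E t) / (2 * \<epsilon> * \<kappa>)"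
proof -
  \<comment> \<open>By AM-GM, norm (x' u) \<le> \<epsilon>/2 + norm (x' u)^2/(2\<epsilon>) \<le> \<phi>' u.\<close>
  define \<phi> where "\<phi> u = \<epsilon> * u / 2 - E u / (2 * \<epsilon> * \<kappa>)" for u
  have \<phi>': "(\<phi> has_vector_derivative \<epsilon> / 2 - E' u / (2 * \<epsilon> * \<kappa>)) (at u)" if "u \<in> {a..t}" for u
    unfolding \<phi>_def has_real_derivative_iff_has_vector_derivative[symmetric]
    using DERIV_diff[OF DERIV_cdivide[OF DERIV_cmult[OF DERIV_ident]] DERIV_cdivide[OF E'[OF that]]]
    by simp
  have "norm (x t - x a) \<le> \<phi> t - \<phi> a"
  proof (rule differentiable_bound_general[OF \<open>a < t\<close>])
    show "continuous_on {a..t} x"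
      using x' by (meson continuous_at_imp_continuous_on has_vector_derivative_continuous)
    show "continuous_on {a..t} \<phi>"
      using \<phi>' by (meson continuous_at_imp_continuous_on has_vector_derivative_continuous)
    fix u assume "a < u" "u < t"
    then have u: "u \<in> {a..t}" by simp
    show "(x has_vector_derivative x' u) (at u)" "(\<phi> has_vector_derivative \<epsilon> / 2 - E' u / (2 * \<epsilon> * \<kappa>)) (at u)"
      using x'[OF u] \<phi>'[OF u] .
    have "0 \<le> (norm (x' u) - \<epsilon>)\<^sup>2" by simp
    then have "norm (x' u) \<le> \<epsilon> / 2 + (norm (x' u))\<^sup>2 / (2 * \<epsilon>)"
      using \<open>\<epsilon> > 0\<close> by (simp add: field_simps power2_eq_square)
    also have "(norm (x' u))\<^sup>2 / (2 * \<epsilon>) \<le> - E' u / (2 * \<epsilon> * \<kappa>)"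
      using dissip[OF u] \<open>\<epsilon> > 0\<close> \<open>\<kappa> > 0\<close> by (simp add: field_simps)
    finally show "norm (x' u) \<le> \<epsilon> / 2 - E' u / (2 * \<epsilon> * \<kappa>)" by simp
  qed
  also have "\<dots> = \<epsilon> * (t - a) / 2 + (E a - E t) / (2 * \<epsilon> * \<kappa>)"
    unfolding \<phi>_def by (simp add: diff_divide_distrib algebra_simps)
  finally show ?thesis .
qed

lemma dissipation_eventually_confines:
  fixes x :: "real \<Rightarrow> 'a::real_normed_vector" and E :: "real \<Rightarrow> real"
  assumes "\<kappa> > 0" "T > 0" "r > 0"
    and x': "\<And>u. u > 0 \<Longrightarrow> (x has_vector_derivative x' u) (at u)"
    and E': "\<And>u. u > 0 \<Longrightarrow> (E has_real_derivative E' u) (at u)"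
    and dissip: "\<And>u. u > 0 \<Longrightarrow> E' u \<le> - \<kappa> * (norm (x' u))\<^sup>2"
    and bounded: "\<And>u. u > 0 \<Longrightarrow> B \<le> E u"
  shows "\<exists>N>0. \<forall>s\<ge>N. \<forall>t\<in>{s..s+T}. dist (x t) (x s) \<le> r"
proof -
  have antitone: "E t \<le> E s" if "0 < s" "s \<le> t" for s t
  proof (rule DERIV_nonpos_imp_nonincreasing[OF \<open>s \<le> t\<close>])
    fix u assume "s \<le> u" "u \<le> t"
    with that have "u > 0" by linarith
    moreover have "- \<kappa> * (norm (x' u))\<^sup>2 \<le> 0" using \<open>\<kappa> > 0\<close> by simp
    ultimately show "\<exists>d. DERIV E u :> d \<and> d \<le> 0" using E' dissip by (meson order_trans)
  qed
  define \<epsilon> where "\<epsilon> = r / T"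
  define \<delta> where "\<delta> = r * \<epsilon> * \<kappa>"
  have "\<epsilon> > 0" "\<delta> > 0" unfolding \<epsilon>_def \<delta>_def using assms(1-3) by simp_all
  have bdd: "bdd_below (E ` {0<..})" using bounded by (auto intro!: bdd_belowI2)
  have "\<exists>e\<in>E ` {0<..}. e < Inf (E ` {0<..}) + \<delta>"
    using \<open>\<delta> > 0\<close> by (intro cInf_lessD) auto
  then obtain N where N: "N > 0" "E N < Inf (E ` {0<..}) + \<delta>" by auto
  have "dist (x t) (x s) \<le> r" if "N \<le> s" "t \<in> {s..s+T}" for s t
  proof (cases "s = t")
    case False
    with that have "s < t" by simp
    have "Inf (E ` {0<..}) \<le> E t" using that N by (intro cInf_lower[OF _ bdd]) auto
    moreover have "E s \<le> E N" using antitone that N by simp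
    ultimately have "E s - E t \<le> \<delta>" using N by simp
    then have "(E s - E t) / (2 * \<epsilon> * \<kappa>) \<le> r / 2"
      using \<open>\<epsilon> > 0\<close> \<open>\<kappa> > 0\<close> unfolding \<delta>_def by (simp add: field_simps)
    moreover have "\<epsilon> * (t - s) \<le> \<epsilon> * T" using that \<open>\<epsilon> > 0\<close> by simp
    then have "\<epsilon> * (t - s) / 2 \<le> r / 2" using \<open>T > 0\<close> unfolding \<epsilon>_def by simp
    moreover have "norm (x t - x s) \<le> \<epsilon> * (t - s) / 2 + (E s - E t) / (2 * \<epsilon> * \<kappa>)"
      using \<open>s < t\<close> \<open>\<epsilon> > 0\<close> \<open>\<kappa> > 0\<close> that N
      by (intro dissipation_displacement_bound[where x' = x' and E' = E']) (use x' E' dissip in auto)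
    ultimately show ?thesis unfolding dist_norm by linarith
  qed (use \<open>r > 0\<close> in simp)
  with N show ?thesis by blast
qed

lemma near_omega_limit_for_duration:
  fixes x :: "real \<Rightarrow> 'a::metric_space"
  assumes confined: "\<forall>s\<ge>N. \<forall>t\<in>{s..s+T}. dist (x t) (x s) \<le> r / 2"
    and omega: "\<exists>s :: nat \<Rightarrow> real. filterlim s at_top sequentially \<and> (\<lambda>k. x (s k)) \<longlonglongrightarrow> x\<omega>"
    and "r > 0"
  obtains a where "a \<ge> N" "\<forall>t\<in>{a..a+T}. dist (x t) x\<omega> < r"
proof -
  obtain s :: "nat \<Rightarrow> real" where s: "filterlim s at_top sequentially" "(\<lambda>k. x (s k)) \<longlonglongrightarrow> x\<omega>"
    using omega by blast
  have "\<forall>\<^sub>F k in sequentially. N \<le> s k"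
    using s(1) unfolding filterlim_at_top by blast
  moreover have "\<forall>\<^sub>F k in sequentially. dist (x (s k)) x\<omega> < r / 2"
    using tendstoD[OF s(2), of "r / 2"] \<open>r > 0\<close> by simp
  ultimately have "\<forall>\<^sub>F k in sequentially. N \<le> s k \<and> dist (x (s k)) x\<omega> < r / 2"
    by (rule eventually_conj)
  then obtain k where k: "N \<le> s k" "dist (x (s k)) x\<omega> < r / 2"
    using eventually_happens'[OF sequentially_bot] by blast
  have "dist (x t) x\<omega> < r" if "t \<in> {s k..s k + T}" for t
  proof -
    have "dist (x t) (x (s k)) \<le> r / 2" using confined k(1) that by simp
    then show ?thesis using dist_triangle[of "x t" x\<omega> "x (s k)"] k(2) by linarith
  qed
  with k(1) show ?thesis by (intro that) auto
qed

lemma kernel_second_deriv_has_derivative: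
  assumes "kernel \<theta>" "y > 0"
  shows "((deriv ^^ 2) \<theta> has_real_derivative (deriv ^^ 3) \<theta> y) (at y)"
  using assms unfolding kernel_def Cinf_real_on_def numeral_3_eq_3 numeral_2_eq_2 by blast

lemma kernel_second_deriv_pos: "kernel \<theta> \<Longrightarrow> y > 0 \<Longrightarrow> (deriv ^^ 2) \<theta> y > 0"
  unfolding kernel_def by blast

lemma kernel_second_deriv_antimono:
  assumes "kernel \<theta>" "0 < y" "y \<le> z"
  shows "(deriv ^^ 2) \<theta> z \<le> (deriv ^^ 2) \<theta> y"
proof (rule DERIV_nonpos_imp_nonincreasing[OF \<open>y \<le> z\<close>])
  fix u assume "y \<le> u"
  with assms have "u > 0" by linarith
  with assms(1) show "\<exists>d. DERIV ((deriv ^^ 2) \<theta>) u :> d \<and> d \<le> 0"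
    using kernel_second_deriv_has_derivative unfolding kernel_def by (meson less_imp_le)
qed

lemma psimplex_int_subset_psimplex: "psimplex_int \<subseteq> psimplex"
  unfolding psimplex_int_def psimplex_def by (auto intro: less_imp_le)

lemma psimplex_component_le_1:
  assumes "y \<in> psimplex"
  shows "y $ a \<le> 1"
proof -
  have "y $ a \<le> (\<Sum>b\<in>UNIV. y $ b)"
    using assms unfolding psimplex_def by (intro member_le_sum) auto
  with assms show ?thesis unfolding psimplex_def by simp
qed

lemma psimplex_norm_le_1:
  assumes "y \<in> psimplex"
  shows "norm y \<le> 1"
proof -
  have "norm y \<le> (\<Sum>a\<in>UNIV. \<bar>y $ a\<bar>)" by (rule norm_le_l1_cart)
  also have "\<dots> = 1" using assms unfolding psimplex_def by simp
  finally show ?thesis .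
qed

lemma lipschitz_on_psimplex_bounded_above:
  assumes "L-lipschitz_on W \<Phi>" "psimplex \<subseteq> W" "y \<in> psimplex" "z \<in> psimplex"
  shows "\<Phi> y \<le> \<Phi> z + 2 * \<bar>L\<bar>"
proof -
  have "dist y z \<le> 2"
    using norm_triangle_ineq4[of y z] psimplex_norm_le_1[OF assms(3)] psimplex_norm_le_1[OF assms(4)]
    by (simp add: dist_norm)
  have "\<Phi> y - \<Phi> z \<le> dist (\<Phi> y) (\<Phi> z)" by (simp add: dist_real_def)
  also have "\<dots> \<le> L * dist y z"
    using assms by (intro lipschitz_onD[OF assms(1)]) auto
  also have "\<dots> \<le> \<bar>L\<bar> * dist y z" by (intro mult_right_mono) simp_all
  also have "\<dots> \<le> \<bar>L\<bar> * 2" using \<open>dist y z \<le> 2\<close> by (intro mult_left_mono) simp_all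
  finally show ?thesis by simp
qed

lemma psimplex_velocity_sum_zero:
  assumes "t > 0" "\<And>u. u > 0 \<Longrightarrow> x u \<in> psimplex" "(x has_vector_derivative v) (at t)"
  shows "(\<Sum>a\<in>UNIV. v $ a) = 0"
proof -
  have "((\<lambda>u. \<Sum>a\<in>UNIV. x u $ a) has_real_derivative (\<Sum>a\<in>UNIV. v $ a)) (at t)"
    by (intro DERIV_sum has_real_derivative_vec_nth[OF assms(3)])
  moreover have "((\<lambda>u. \<Sum>a\<in>UNIV. x u $ a) has_real_derivative 0) (at t)"
    by (rule has_field_derivative_transform_within_open[of "\<lambda>_. 1" 0 t "{0<..}"])
       (use assms(1,2) in \<open>auto simp: psimplex_def\<close>)
  ultimately show ?thesis by (rule DERIV_unique)
qed

definition hessian_metric_sq :: "(real \<Rightarrow> real) \<Rightarrow> real ^ 'n :: finite \<Rightarrow> real ^ 'n \<Rightarrow> real" where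
  "hessian_metric_sq \<theta> y v = (\<Sum>a\<in>UNIV. (deriv ^^ 2) \<theta> (y $ a) * (v $ a)\<^sup>2)"

lemma hessian_metric_sq_ge:
  assumes ker: "kernel \<theta>" and y: "y \<in> psimplex_int"
  shows "(deriv ^^ 2) \<theta> 1 * (norm v)\<^sup>2 \<le> hessian_metric_sq \<theta> y v"
proof -
  have "(deriv ^^ 2) \<theta> 1 * (norm v)\<^sup>2 = (\<Sum>a\<in>UNIV. (deriv ^^ 2) \<theta> 1 * (v $ a)\<^sup>2)"
    by (simp add: norm_vec_def L2_set_def sum_nonneg sum_distrib_left)
  also have "\<dots> \<le> hessian_metric_sq \<theta> y v"
    unfolding hessian_metric_sq_def
  proof (intro sum_mono mult_right_mono)
    fix a
    have "y $ a > 0" using y unfolding psimplex_int_def by blast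
    moreover have "y $ a \<le> 1"
      using y psimplex_int_subset_psimplex psimplex_component_le_1 by blast
    ultimately show "(deriv ^^ 2) \<theta> 1 \<le> (deriv ^^ 2) \<theta> (y $ a)"
      by (rule kernel_second_deriv_antimono[OF ker])
  qed simp
  finally show ?thesis .
qed

definition ID_energy :: "(real \<Rightarrow> real) \<Rightarrow> (real ^ 'n :: finite \<Rightarrow> real) \<Rightarrow> real ^ 'n \<Rightarrow> real ^ 'n \<Rightarrow> real" where
  "ID_energy \<theta> \<Phi> y v = hessian_metric_sq \<theta> y v / 2 - \<Phi> y"

lemma ID_rhs_energy_balance:
  fixes y v :: "real ^ 'n :: finite"
  assumes nz: "\<And>a. (deriv ^^ 2) \<theta> (y $ a) \<noteq> 0" and sum0: "(\<Sum>a\<in>UNIV. v $ a) = 0"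
  shows "(\<Sum>a\<in>UNIV. (deriv ^^ 3) \<theta> (y $ a) * v $ a * (v $ a)\<^sup>2
              + (deriv ^^ 2) \<theta> (y $ a) * (2 * v $ a * ID_rhs \<theta> \<Phi> \<eta> y v $ a)) / 2
           - (\<Sum>a\<in>UNIV. v $ a * partial a \<Phi> y)
         = - \<eta> * hessian_metric_sq \<theta> y v"
proof -
  define p where "p a = (deriv ^^ 2) \<theta> (y $ a)" for a
  define q where "q a = (deriv ^^ 3) \<theta> (y $ a)" for a
  define g where "g a = partial a \<Phi> y" for a
  define S1 where "S1 = (\<Sum>b\<in>UNIV. inverse (\<Sum>b\<in>UNIV. 1 / p b) / p b * g b)"
  define S2 where "S2 = (\<Sum>b\<in>UNIV. inverse (\<Sum>b\<in>UNIV. 1 / p b) / p b * q b * (v $ b)\<^sup>2)"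
  have rhs: "ID_rhs \<theta> \<Phi> \<eta> y v $ a
      = 1 / p a * (g a - S1) - 1 / (2 * p a) * (q a * (v $ a)\<^sup>2 - S2) - \<eta> * v $ a" for a
    unfolding ID_rhs_def Let_def p_def q_def g_def S1_def S2_def by simp
  \<comment> \<open>The cubic terms cancel, and the Lagrange-multiplier terms S1, S2 are killed by the tangency of v.\<close>
  have summand: "q a * v $ a * (v $ a)\<^sup>2 + p a * (2 * v $ a * ID_rhs \<theta> \<Phi> \<eta> y v $ a)
      = 2 * (v $ a * g a) + (S2 - 2 * S1) * v $ a - 2 * \<eta> * (p a * (v $ a)\<^sup>2)" for a
    using nz[of a] unfolding rhs p_def by (simp add: field_simps power2_eq_square)
  have "(\<Sum>a\<in>UNIV. q a * v $ a * (v $ a)\<^sup>2 + p a * (2 * v $ a * ID_rhs \<theta> \<Phi> \<eta> y v $ a))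
      = 2 * (\<Sum>a\<in>UNIV. v $ a * g a) + (S2 - 2 * S1) * (\<Sum>a\<in>UNIV. v $ a)
        - 2 * \<eta> * hessian_metric_sq \<theta> y v"
    unfolding summand hessian_metric_sq_def p_def[symmetric]
    by (simp add: sum.distrib sum_subtractf sum_distrib_left)
  then show ?thesis
    using sum0 unfolding p_def q_def g_def by (simp add: field_simps)
qed

lemma ID_energy_has_derivative:
  assumes ker: "kernel \<theta>" and y: "x t \<in> psimplex_int" and \<Phi>: "\<Phi> differentiable (at (x t))"
    and x': "(x has_vector_derivative v t) (at t)"
    and v': "(v has_vector_derivative ID_rhs \<theta> \<Phi> \<eta> (x t) (v t)) (at t)"
    and tangent: "(\<Sum>a\<in>UNIV. v t $ a) = 0"
  shows "((\<lambda>u. ID_energy \<theta> \<Phi> (x u) (v u)) has_real_derivative - \<eta> * hessian_metric_sq \<theta> (x t) (v t)) (at t)"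
proof -
  have pos: "x t $ a > 0" for a using y unfolding psimplex_int_def by blast
  have "((\<lambda>u. (deriv ^^ 2) \<theta> (x u $ a) * (v u $ a)\<^sup>2) has_real_derivative
      (deriv ^^ 3) \<theta> (x t $ a) * v t $ a * (v t $ a)\<^sup>2
      + (deriv ^^ 2) \<theta> (x t $ a) * (2 * v t $ a * ID_rhs \<theta> \<Phi> \<eta> (x t) (v t) $ a)) (at t)" for a
  proof -
    have p': "((\<lambda>u. (deriv ^^ 2) \<theta> (x u $ a)) has_real_derivative (deriv ^^ 3) \<theta> (x t $ a) * v t $ a) (at t)"
      using DERIV_chain'[OF has_real_derivative_vec_nth[OF x'] kernel_second_deriv_has_derivative[OF ker pos]]
      by (simp add: mult.commute)
    have w': "((\<lambda>u. (v u $ a)\<^sup>2) has_real_derivative 2 * v t $ a * ID_rhs \<theta> \<Phi> \<eta> (x t) (v t) $ a) (at t)"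
      using DERIV_power[OF has_real_derivative_vec_nth[OF v'], where n = 2] by (simp add: mult.commute mult.assoc)
    show ?thesis using DERIV_mult'[OF p' w'] by (simp add: algebra_simps)
  qed
  then have "((\<lambda>u. ID_energy \<theta> \<Phi> (x u) (v u)) has_real_derivative
      (\<Sum>a\<in>UNIV. (deriv ^^ 3) \<theta> (x t $ a) * v t $ a * (v t $ a)\<^sup>2
              + (deriv ^^ 2) \<theta> (x t $ a) * (2 * v t $ a * ID_rhs \<theta> \<Phi> \<eta> (x t) (v t) $ a)) / 2
      - (\<Sum>a\<in>UNIV. v t $ a * partial a \<Phi> (x t))) (at t)"
    unfolding ID_energy_def[abs_def] hessian_metric_sq_def
    by (intro DERIV_diff DERIV_cdivide DERIV_sum has_real_derivative_comp_partial[OF \<Phi> x'])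
  moreover have "\<And>a. (deriv ^^ 2) \<theta> (x t $ a) \<noteq> 0"
    using kernel_second_deriv_pos[OF ker pos] by (metis less_irrefl)
  ultimately show ?thesis
    using ID_rhs_energy_balance[OF _ tangent] by simp
qed

lemma ID_interior_solution_dissipative:
  assumes ker: "kernel \<theta>" and W: "psimplex \<subseteq> W" "smooth_on W \<Phi>" and L: "L-lipschitz_on W \<Phi>"
    and "\<eta> \<ge> 0" and sol: "ID_interior_solution \<theta> \<Phi> \<eta> x"
  obtains x' E E' B where
    "\<And>u. u \<ge> 0 \<Longrightarrow> x u \<in> psimplex"
    "\<And>u. u > 0 \<Longrightarrow> (x has_vector_derivative x' u) (at u)"
    "\<And>u. u > 0 \<Longrightarrow> (E has_real_derivative E' u) (at u)"
    "\<And>u. u > 0 \<Longrightarrow> E' u \<le> - (\<eta> * (deriv ^^ 2) \<theta> 1) * (norm (x' u))\<^sup>2"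
    "\<And>u. u > 0 \<Longrightarrow> B \<le> E u"
proof -
  obtain xd xdd where S: "\<And>u. u \<ge> 0 \<Longrightarrow> x u \<in> psimplex_int
      \<and> (x has_vector_derivative xd u) (at u within {0..})
      \<and> (xd has_vector_derivative xdd u) (at u within {0..})
      \<and> xdd u = ID_rhs \<theta> \<Phi> \<eta> (x u) (xd u)"
    using sol unfolding ID_interior_solution_def by blast
  have at_interior: "at u within {0..} = at u" if "u > 0" for u :: real
    using that by (intro at_within_interior) simp
  have int: "x u \<in> psimplex_int" if "u \<ge> 0" for u using S[OF that] by blast
  have simplex: "x u \<in> psimplex" if "u \<ge> 0" for u
    using int[OF that] psimplex_int_subset_psimplex by blast
  have x': "(x has_vector_derivative xd u) (at u)" if "u > 0" for u
    using S[of u] at_interior[OF that] that by simp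
  have xd': "(xd has_vector_derivative ID_rhs \<theta> \<Phi> \<eta> (x u) (xd u)) (at u)" if "u > 0" for u
    using S[of u] at_interior[OF that] that by auto
  have "\<forall>y\<in>W. \<Phi> differentiable (at y)"
    using W(2) unfolding smooth_on_def by (metis Ck_on.simps(2))
  then have \<Phi>': "\<Phi> differentiable (at (x u))" if "u \<ge> 0" for u
    using simplex[OF that] W(1) by blast
  have hess: "(deriv ^^ 2) \<theta> 1 * (norm (xd u))\<^sup>2 \<le> hessian_metric_sq \<theta> (x u) (xd u)" if "u \<ge> 0" for u
    using hessian_metric_sq_ge[OF ker int[OF that]] .
  have c: "(deriv ^^ 2) \<theta> 1 > 0" using kernel_second_deriv_pos[OF ker] by simp
  show ?thesis
  proof (rule that[of xd "\<lambda>u. ID_energy \<theta> \<Phi> (x u) (xd u)" "\<lambda>u. - \<eta> * hessian_metric_sq \<theta> (x u) (xd u)"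
        "- \<Phi> (x 1) - 2 * \<bar>L\<bar>"])
    fix u :: real assume u: "u > 0"
    show "(x has_vector_derivative xd u) (at u)" using x'[OF u] .
    have "(\<Sum>a\<in>UNIV. xd u $ a) = 0"
      by (rule psimplex_velocity_sum_zero[OF u _ x'[OF u]]) (use simplex in simp)
    with u show "((\<lambda>u. ID_energy \<theta> \<Phi> (x u) (xd u)) has_real_derivative
        - \<eta> * hessian_metric_sq \<theta> (x u) (xd u)) (at u)"
      by (intro ID_energy_has_derivative[OF ker int \<Phi>' x' xd']) simp_all
    show "- \<eta> * hessian_metric_sq \<theta> (x u) (xd u) \<le> - (\<eta> * (deriv ^^ 2) \<theta> 1) * (norm (xd u))\<^sup>2"
      using mult_left_mono[OF hess \<open>\<eta> \<ge> 0\<close>] u by (simp add: mult.assoc)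
    have "0 \<le> (deriv ^^ 2) \<theta> 1 * (norm (xd u))\<^sup>2" using c by simp
    then have "0 \<le> hessian_metric_sq \<theta> (x u) (xd u)"
      using hess[of u] u by linarith
    moreover have "\<Phi> (x u) \<le> \<Phi> (x 1) + 2 * \<bar>L\<bar>"
      using lipschitz_on_psimplex_bounded_above[OF L W(1) simplex simplex, of u 1] u by simp
    ultimately show "- \<Phi> (x 1) - 2 * \<bar>L\<bar> \<le> ID_energy \<theta> \<Phi> (x u) (xd u)"
      unfolding ID_energy_def by simp
  qed (rule simplex)
qed

theorem lemma4p3:
  fixes \<theta> :: "real \<Rightarrow> real" and \<Phi> :: "real ^ 'n :: finite \<Rightarrow> real"
    and \<eta> :: real and x :: "real \<Rightarrow> real ^ 'n" and x\<omega> :: "real ^ 'n"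
    and U :: "(real ^ 'n) set"
  assumes n: "CARD('n) \<ge> 2"
    and ker: "kernel \<theta>"
    and Phi: "\<exists>W. open W \<and> psimplex \<subseteq> W \<and> smooth_on W \<Phi> \<and> (\<exists>L. L-lipschitz_on W \<Phi>)"
    and eta: "\<eta> > 0"
    and sol: "ID_interior_solution \<theta> \<Phi> \<eta> x"
    and omega: "\<exists>s :: nat \<Rightarrow> real. filterlim s at_top sequentially \<and> (\<lambda>k. x (s k)) \<longlonglongrightarrow> x\<omega>"
    and U: "U \<subseteq> psimplex" "\<exists>V. open V \<and> x\<omega> \<in> V \<and> V \<inter> psimplex \<subseteq> U"
  shows "\<forall>T>0. \<exists>a b. 0 \<le> a \<and> b - a \<ge> T \<and> (\<forall>t\<in>{a..b}. x t \<in> U)"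
proof (intro allI impI)
  fix T :: real assume "T > 0"
  obtain W L where W: "psimplex \<subseteq> W" "smooth_on W \<Phi>" "L-lipschitz_on W \<Phi>" using Phi by blast
  obtain x' E E' B where simplex: "\<And>u. u \<ge> 0 \<Longrightarrow> x u \<in> psimplex"
    and dissipative: "\<And>u. u > 0 \<Longrightarrow> (x has_vector_derivative x' u) (at u)"
      "\<And>u. u > 0 \<Longrightarrow> (E has_real_derivative E' u) (at u)"
      "\<And>u. u > 0 \<Longrightarrow> E' u \<le> - (\<eta> * (deriv ^^ 2) \<theta> 1) * (norm (x' u))\<^sup>2"
      "\<And>u. u > 0 \<Longrightarrow> B \<le> E u"
    using ID_interior_solution_dissipative[OF ker W less_imp_le[OF eta] sol] by metis
  obtain V r where V: "V \<inter> psimplex \<subseteq> U" "r > 0" "ball x\<omega> r \<subseteq> V"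
    using U(2) open_contains_ball by metis
  have "\<eta> * (deriv ^^ 2) \<theta> 1 > 0" using eta kernel_second_deriv_pos[OF ker] by simp
  moreover have "r / 2 > 0" using \<open>r > 0\<close> by simp
  ultimately obtain N where "N > 0" "\<forall>s\<ge>N. \<forall>t\<in>{s..s+T}. dist (x t) (x s) \<le> r / 2"
    using dissipation_eventually_confines[OF _ \<open>T > 0\<close> _ dissipative] by blast
  then obtain a where a: "a \<ge> N" "\<forall>t\<in>{a..a+T}. dist (x t) x\<omega> < r"
    using near_omega_limit_for_duration[OF _ omega \<open>r > 0\<close>] by blast
  have "x t \<in> U" if "t \<in> {a..a+T}" for t
    using a(2) that V simplex[of t] \<open>N > 0\<close> a(1) by (auto simp: dist_commute subset_iff)
  with \<open>N > 0\<close> a(1) show "\<exists>a b. 0 \<le> a \<and> b - a \<ge> T \<and> (\<forall>t\<in>{a..b}. x t \<in> U)"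
    by (intro exI[of _ a] exI[of _ "a + T"]) auto
qed

end
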